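(* Assume the superexponential regime $a_T/T\to\infty$, and let $\hat c_{\mathrm R}(x,\mathbb P,T)=\max_{i\in\Sigma}\ell(x,i)$ for all $x,\mathbb P,T$. Then $\hat c_{\mathrm R}\in\mathcal C$, it satisfies the out-of-sample guarantee with speed $(a_T)$ (indeed $\mathbb P^\infty(c(x,\mathbb P)>\hat c_{\mathrm R}(x,\hat{\mathbb P}_T,T))=0$ for all $T$), and for every $\hat c\in\mathcal C$ satisfying the out-of-sample guarantee with speed $(a_T)$ we have $\hat c_{\mathrm R}\preceq_{\mathcal C}\hat c$.
   Context: Setting: $\Sigma=\{1,\dots,d\}$ ($d\ge2$) is finite; $\mathcal P\subset\mathbb R^d$ is the probability simplex over $\Sigma$ and $\mathcal P^o$ its relative interior (all entries positive). $\mathcal X\subset\mathbb R^n$ is compact and $\ell:\mathcal X\times\Sigma\to\mathbb R$ is continuous in $x$ for each $i$. For $x\in\mathcal X$, $\mu\in\mathbb R^d$ let $c(x,\mu)=\sum_{i\in\Sigma}\ell(x,i)\mu(i)$. Data $\xi_1,\xi_2,\dots$ are i.i.d. with law $\mathbb P\in\mathcal P$, $\mathbb P^\infty$ denotes their joint law, and $\hat{\mathbb P}_T(i)=\frac1T\sum_{t=1}^T\mathbf 1\{\xi_t=i\}$. $(a_T)_{T\ge1}$ is a sequence of positive reals with $a_T\to\infty$. A predictor is a sequence $\hat c=(\hat c(\cdot,\cdot,T))_{T\in\mathbb N}$ of functions $\mathcal X\times\mathcal P\to\mathbb R$. It is regular, written $\hat c\in\mathcal C$, if (i) the sequence $(\hat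 c(\cdot,\cdot,T))_T$ is uniformly bounded and equicontinuous on $\mathcal X\times\mathcal P$, and (ii) each $\hat c(x,\cdot,T)$ is differentiable in $\mathbb P$ and the sequence of derivative maps $(x,\mathbb P)\mapsto\nabla_{\mathbb P}\hat c(x,\mathbb P,T)$ is uniformly bounded and equicontinuous. (A sequence $(f_T)$ is equicontinuous if for every point $y$ and $\varepsilon>0$ there is a neighbourhood $U$ of $y$ with $|f_T(y)-f_T(z)|<\varepsilon$ for all $z\in U$ and all $T$.) Out-of-sample guarantee with speed $(a_T)$: for all $x\in\mathcal X$ and $\mathbb P\in\mathcal P^o$, $\limsup_{T\to\infty}\frac1{a_T}\log\mathbb P^\infty\big(c(x,\mathbb P)>\hat c(x,\hat{\mathbb P}_T,T)\big)\le-1$. Order: $\hat c_1\preceq_{\mathcal C}\hat c_2$ iff for all $(x,\mathbb P)\in\mathcal X\times\mathcal P^o$, $\limsup_{T\to\infty}\frac{|\hat c_1(x,\mathbb P,T)-c(x,\mathbb P)|}{|\hat c_2(x,\mathbb P,T)-c(x,\mathbb P)|}\le1$, with the convention $0/0=1$. *)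

theory Defs
  imports "HOL-Probability.Probability"
begin

text \<open>Alphabet \<Sigma> is a finite type 'd (CARD('d) = d); distributions are vectors real^'d.\<close>

definition psimplex :: "(real^'d::finite) set" where
  "psimplex = {p. (\<forall>i. 0 \<le> p $ i) \<and> (\<Sum>i\<in>UNIV. p $ i) = 1}"

definition psimplex_int :: "(real^'d::finite) set" where
  "psimplex_int = {p. (\<forall>i. 0 < p $ i) \<and> (\<Sum>i\<in>UNIV. p $ i) = 1}"

definition cost :: "('x \<Rightarrow> 'd::finite \<Rightarrow> real) \<Rightarrow> 'x \<Rightarrow> real^'d \<Rightarrow> real" where
  "cost l x mu = (\<Sum>i\<in>UNIV. l x i * mu $ i)"

text \<open>Law of a single datum, and the joint law P^infinity of the i.i.d. sequence
  (xi_1, xi_2, ...) = (omega 0, omega 1, ...).\<close>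
definition law :: "real^'d \<Rightarrow> 'd measure" where
  "law P = density (count_space UNIV) (\<lambda>i. ennreal (P $ i))"

definition iid :: "real^'d \<Rightarrow> (nat \<Rightarrow> 'd) measure" where
  "iid P = PiM (UNIV :: nat set) (\<lambda>_. law P)"

definition emp :: "nat \<Rightarrow> (nat \<Rightarrow> 'd::finite) \<Rightarrow> real^'d" where
  "emp T \<omega> = (\<chi> i. real (card {t\<in>{..<T}. \<omega> t = i}) / real T)"

definition eln :: "real \<Rightarrow> ereal" where
  "eln p = (if p \<le> 0 then - \<infinity> else ereal (ln p))"

definition eratio :: "real \<Rightarrow> real \<Rightarrow> ereal" where
  "eratio a b = (if b = 0 then (if a = 0 then 1 else \<infinity>) else ereal (a / b))"

definition equicontinuous_on :: "'a::metric_space set \<Rightarrow> (nat \<Rightarrow> 'a \<Rightarrow> 'b::metric_space) \<Rightarrow> bool" where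
  "equicontinuous_on S f \<longleftrightarrow>
     (\<forall>y\<in>S. \<forall>e>0. \<exists>\<delta>>0. \<forall>z\<in>S. dist z y < \<delta> \<longrightarrow> (\<forall>T. dist (f T y) (f T z) < e))"

text \<open>Regular predictors (the class C). A predictor is chat x P T.\<close>
definition regular :: "(real^'n) set \<Rightarrow> (real^'n \<Rightarrow> real^'d \<Rightarrow> nat \<Rightarrow> real) \<Rightarrow> bool" where
  "regular X ch \<longleftrightarrow>
     (\<exists>B. \<forall>T. \<forall>x\<in>X. \<forall>P\<in>psimplex. \<bar>ch x P T\<bar> \<le> B) \<and>
     equicontinuous_on (X \<times> psimplex) (\<lambda>T (x, P). ch x P T) \<and>
     (\<exists>D :: nat \<Rightarrow> real^'n \<Rightarrow> real^'d \<Rightarrow> real^'d.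
        (\<forall>T. \<forall>x\<in>X. \<forall>P\<in>psimplex.
            ((\<lambda>Q. ch x Q T) has_derivative (\<lambda>h. D T x P \<bullet> h)) (at P within psimplex)) \<and>
        (\<exists>B. \<forall>T. \<forall>x\<in>X. \<forall>P\<in>psimplex. norm (D T x P) \<le> B) \<and>
        equicontinuous_on (X \<times> psimplex) (\<lambda>T (x, P). D T x P))"

definition oos_guarantee ::
  "(real^'n) set \<Rightarrow> (real^'n \<Rightarrow> 'd::finite \<Rightarrow> real) \<Rightarrow> (nat \<Rightarrow> real) \<Rightarrow> (real^'n \<Rightarrow> real^'d \<Rightarrow> nat \<Rightarrow> real) \<Rightarrow> bool" where
  "oos_guarantee X l a ch \<longleftrightarrow>
     (\<forall>x\<in>X. \<forall>P\<in>psimplex_int.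
        limsup (\<lambda>T. eln (measure (iid P) {\<omega>\<in>space (iid P). cost l x P > ch x (emp T \<omega>) T}) / ereal (a T))
          \<le> -1)"

definition pred_le ::
  "(real^'n) set \<Rightarrow> (real^'n \<Rightarrow> 'd::finite \<Rightarrow> real) \<Rightarrow> (real^'n \<Rightarrow> real^'d \<Rightarrow> nat \<Rightarrow> real) \<Rightarrow> (real^'n \<Rightarrow> real^'d \<Rightarrow> nat \<Rightarrow> real) \<Rightarrow> bool" where
  "pred_le X l c1 c2 \<longleftrightarrow>
     (\<forall>x\<in>X. \<forall>P\<in>psimplex_int.
        limsup (\<lambda>T. eratio \<bar>c1 x P T - cost l x P\<bar> \<bar>c2 x P T - cost l x P\<bar>) \<le> 1)"

definition robust_pred :: "(real^'n \<Rightarrow> 'd::finite \<Rightarrow> real) \<Rightarrow> real^'n \<Rightarrow> real^'d \<Rightarrow> nat \<Rightarrow> real" where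
  "robust_pred l x P T = Max ((\<lambda>i. l x i) ` UNIV)"

end

theory Submission
  imports Defs
begin

text \<open>
  The robust predictor never underestimates the cost, since an average of the losses is at most
  their maximum. Conversely, under an interior law \<open>P\<close> every event that depends only on the first
  \<open>T\<close> data and is nonempty has probability at least \<open>(min\<^sub>i P(i))\<^sup>T\<close>. As \<open>a\<^sub>T / T \<rightarrow> \<infinity>\<close>, a
  predictor with the out-of-sample guarantee at an interior law \<open>Q\<close> must therefore eventually be
  at least \<open>c(x, Q)\<close> at every empirical distribution of length \<open>T\<close>. These are \<open>O(1/T)\<close>-dense
  in the simplex, so equicontinuity yields \<open>liminf\<^sub>T ch(x, P, T) \<ge> sup\<^sub>Q c(x, Q) = max\<^sub>i l(x, i)\<close>,
  and the error ratio against the robust predictor has limsup at most 1.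
\<close>

lemma space_law [simp]: "space (law P) = UNIV"
  by (simp add: law_def)

lemma sets_law [simp]: "sets (law P) = UNIV"
  by (simp add: law_def)

lemma space_iid [simp]: "space (iid P) = UNIV"
  by (simp add: iid_def space_PiM)

lemma psimplex_int_subset: "psimplex_int \<subseteq> psimplex"
  by (auto simp: psimplex_int_def psimplex_def less_imp_le)

lemma emeasure_law_singleton:
  assumes "P \<in> psimplex"
  shows "emeasure (law P) {i} = ennreal (P $ i)"
  using assms unfolding law_def psimplex_def by (subst emeasure_density) auto

lemma prob_space_law:
  assumes "P \<in> psimplex"
  shows "prob_space (law P)"
proof
  have "emeasure (law P) (space (law P)) = (\<Sum>i\<in>UNIV. ennreal (P $ i))"
    unfolding law_def by (subst emeasure_density) (auto simp: nn_integral_count_space_finite)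
  also have "\<dots> = 1"
    using assms by (subst sum_ennreal) (auto simp: psimplex_def)
  finally show "emeasure (law P) (space (law P)) = 1" .
qed

lemma prob_space_iid:
  assumes "P \<in> psimplex"
  shows "prob_space (iid P)"
  unfolding iid_def by (intro prob_space_PiM prob_space_law assms)

lemma iid_prefix_eq:
  "{\<omega>. \<forall>t<T. \<omega> t = s t} = prod_emb UNIV (\<lambda>_. law P) {..<T} (PiE {..<T} (\<lambda>t. {s t}))"
  by (auto simp: prod_emb_iff space_PiM restrict_PiE_iff)

lemma sets_iid_prefix: "{\<omega>. \<forall>t<T. \<omega> t = s t} \<in> sets (iid P)"
  unfolding iid_prefix_eq[of T s P] iid_def by (rule sets_PiM_I) auto

lemma measure_iid_prefix:
  assumes "P \<in> psimplex"
  shows "measure (iid P) {\<omega>. \<forall>t<T. \<omega> t = s t} = (\<Prod>t<T. P $ s t)"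
proof -
  have nonneg: "0 \<le> P $ i" for i
    using assms by (simp add: psimplex_def)
  interpret product_prob_space "\<lambda>_. law P" "UNIV :: nat set"
    using prob_space_law[OF assms]
    by (simp add: product_prob_space_def product_prob_space_axioms_def product_sigma_finite_def
        prob_space_imp_sigma_finite)
  have "emeasure (iid P) {\<omega>. \<forall>t<T. \<omega> t = s t} = (\<Prod>t<T. emeasure (law P) {s t})"
    using emeasure_PiM_Collect[of "{..<T}" "\<lambda>t. {s t}"] by (simp add: iid_def space_PiM Ball_def)
  also have "\<dots> = ennreal (\<Prod>t<T. P $ s t)"
    using nonneg by (simp add: emeasure_law_singleton[OF assms] prod_ennreal)
  finally show ?thesis
    using nonneg by (simp add: measure_def prod_nonneg)
qed

lemma emp_cong:
  assumes "\<And>t. t < T \<Longrightarrow> \<omega> t = \<omega>' t"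
  shows "emp T \<omega> = emp T \<omega>'"
proof -
  have "{t\<in>{..<T}. \<omega> t = i} = {t\<in>{..<T}. \<omega>' t = i}" for i
    using assms by auto
  then show ?thesis
    by (simp add: emp_def)
qed

lemma emp_in_psimplex:
  assumes "T > 0"
  shows "emp T \<omega> \<in> psimplex"
proof -
  have "(\<Sum>i\<in>UNIV. real (card {t\<in>{..<T}. \<omega> t = i})) = real T"
    using sum.group[of "{..<T}" UNIV \<omega> "\<lambda>_. 1::real"] by simp
  then show ?thesis
    using assms by (simp add: psimplex_def emp_def flip: sum_divide_distrib)
qed

lemma sets_iid_emp_event: "{\<omega>. B (emp T \<omega>)} \<in> sets (iid P)"
proof -
  define S where "S = (\<lambda>\<omega>. restrict \<omega> {..<T}) ` {\<omega>. B (emp T \<omega>)}"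
  have eq: "{\<omega>. B (emp T \<omega>)} = (\<Union>s\<in>S. {\<omega>. \<forall>t<T. \<omega> t = s t})"
  proof (intro set_eqI iffI)
    fix \<omega> assume "\<omega> \<in> (\<Union>s\<in>S. {\<omega>. \<forall>t<T. \<omega> t = s t})"
    then obtain \<omega>' where "B (emp T \<omega>')" "\<forall>t<T. \<omega> t = \<omega>' t"
      by (auto simp: S_def)
    moreover have "emp T \<omega> = emp T \<omega>'"
      using calculation(2) by (intro emp_cong) simp
    ultimately show "\<omega> \<in> {\<omega>. B (emp T \<omega>)}"
      by simp
  next
    fix \<omega> assume "\<omega> \<in> {\<omega>. B (emp T \<omega>)}"
    then show "\<omega> \<in> (\<Union>s\<in>S. {\<omega>. \<forall>t<T. \<omega> t = s t})"
      by (intro UN_I[of "restrict \<omega> {..<T}"]) (auto simp: S_def)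
  qed
  have "finite S"
  proof (rule finite_subset)
    show "S \<subseteq> PiE {..<T} (\<lambda>_. UNIV)"
      unfolding S_def by (rule image_subsetI) (simp add: restrict_PiE_iff)
    show "finite (PiE {..<T} (\<lambda>_. UNIV :: 'a set))"
      by (simp add: finite_PiE)
  qed
  then show ?thesis
    unfolding eq by (rule sets.finite_UN) (rule sets_iid_prefix)
qed

lemma prod_le_measure_emp_event:
  assumes P: "P \<in> psimplex" and B: "B (emp T \<omega>\<^sub>0)"
  shows "(\<Prod>t<T. P $ \<omega>\<^sub>0 t) \<le> measure (iid P) {\<omega>. B (emp T \<omega>)}"
proof -
  interpret prob_space "iid P"
    by (rule prob_space_iid[OF P])
  have "{\<omega>. \<forall>t<T. \<omega> t = \<omega>\<^sub>0 t} \<subseteq> {\<omega>. B (emp T \<omega>)}"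
  proof
    fix \<omega> assume "\<omega> \<in> {\<omega>. \<forall>t<T. \<omega> t = \<omega>\<^sub>0 t}"
    then have "emp T \<omega> = emp T \<omega>\<^sub>0"
      by (intro emp_cong) simp
    then show "\<omega> \<in> {\<omega>. B (emp T \<omega>)}"
      using B by simp
  qed
  then have "measure (iid P) {\<omega>. \<forall>t<T. \<omega> t = \<omega>\<^sub>0 t} \<le> measure (iid P) {\<omega>. B (emp T \<omega>)}"
    by (intro finite_measure_mono sets_iid_emp_event)
  then show ?thesis
    by (simp add: measure_iid_prefix[OF P])
qed

lemma eventually_emp_event_empty:
  fixes a :: "nat \<Rightarrow> real"
  assumes P: "P \<in> psimplex_int"
    and rate: "limsup (\<lambda>T. eln (measure (iid P) {\<omega>\<in>space (iid P). B T (emp T \<omega>)}) / ereal (a T)) \<le> -1"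
    and a_pos: "\<And>T. a T > 0"
    and superexp: "filterlim (\<lambda>T. a T / real T) at_top sequentially"
  shows "eventually (\<lambda>T. \<forall>\<omega>. \<not> B T (emp T \<omega>)) sequentially"
proof -
  define pmin where "pmin = Min (range (\<lambda>i. P $ i))"
  have P_simplex: "P \<in> psimplex"
    using P psimplex_int_subset by blast
  have pmin_pos: "pmin > 0"
    using P by (simp add: pmin_def psimplex_int_def)
  have pmin_le: "pmin \<le> P $ i" for i
    by (simp add: pmin_def)
  have "eventually (\<lambda>T. eln (measure (iid P) {\<omega>. B T (emp T \<omega>)}) / ereal (a T) < ereal (-1/2)) sequentially"
    using rate by (intro Limsup_lessD) (auto simp: one_ereal_def intro: le_less_trans)
  moreover have "((\<lambda>T. ln pmin * inverse (a T / real T)) \<longlongrightarrow> ln pmin * 0) sequentially"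
    by (intro tendsto_mult tendsto_const tendsto_inverse_0_at_top superexp)
  then have "eventually (\<lambda>T. ln pmin * inverse (a T / real T) > -1/2) sequentially"
    by (intro order_tendstoD) auto
  then have "eventually (\<lambda>T. real T * ln pmin / a T > -1/2) sequentially"
    by eventually_elim (simp add: field_simps)
  ultimately show ?thesis
  proof eventually_elim
    case (elim T)
    show "\<forall>\<omega>. \<not> B T (emp T \<omega>)"
    proof (intro allI notI)
      fix \<omega> assume "B T (emp T \<omega>)"
      define m where "m = measure (iid P) {\<omega>. B T (emp T \<omega>)}"
      have "pmin ^ T \<le> (\<Prod>t<T. P $ \<omega> t)"
        using prod_mono[of "{..<T}" "\<lambda>_. pmin"] pmin_pos pmin_le by (simp add: less_imp_le)
      also have "\<dots> \<le> m"
        unfolding m_def by (rule prod_le_measure_emp_event[where B = "B T", OF P_simplex \<open>B T (emp T \<omega>)\<close>])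
      finally have "pmin ^ T \<le> m" .
      have "m > 0"
        using \<open>pmin ^ T \<le> m\<close> pmin_pos by (meson less_le_trans zero_less_power)
      have "real T * ln pmin = ln (pmin ^ T)"
        using pmin_pos by (simp add: ln_realpow)
      also have "\<dots> \<le> ln m"
        using \<open>pmin ^ T \<le> m\<close> pmin_pos by (intro ln_mono) simp_all
      finally have "real T * ln pmin / a T \<le> ln m / a T"
        using a_pos[of T] by (simp add: divide_right_mono)
      then show False
        using elim \<open>m > 0\<close> a_pos[of T] by (simp add: m_def eln_def)
    qed
  qed
qed

lemma exists_seq_with_counts:
  fixes n :: "'d::finite \<Rightarrow> nat"
  shows "\<exists>\<omega>::nat \<Rightarrow> 'd. \<forall>i. card {t\<in>{..<(\<Sum>j\<in>UNIV. n j)}. \<omega> t = i} = n i"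
proof -
  obtain xs :: "'d list" where xs: "set xs = UNIV" "distinct xs"
    using finite_distinct_list[of "UNIV :: 'd set"] by auto
  define L where "L = concat (map (\<lambda>i. replicate (n i) i) xs)"
  have length_L: "length L = (\<Sum>j\<in>UNIV. n j)"
    unfolding L_def using xs by (simp add: length_concat comp_def sum_list_distinct_conv_sum_set)
  have count_L: "length (filter ((=) i) L) = n i" for i
  proof -
    have "length (filter ((=) i) L) = sum_list (map (\<lambda>j. if i = j then n j else 0) xs)"
      unfolding L_def by (induction xs) auto
    also have "\<dots> = n i"
      using xs by (simp add: sum_list_distinct_conv_sum_set)
    finally show ?thesis .
  qed
  have "card {t\<in>{..<(\<Sum>j\<in>UNIV. n j)}. L ! t = i} = n i" for i
  proof -
    have "{t\<in>{..<(\<Sum>j\<in>UNIV. n j)}. L ! t = i} = {t. t < length L \<and> i = L ! t}"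
      using length_L by auto
    then show ?thesis
      using count_L[of i] by (simp add: length_filter_conv_card)
  qed
  then show ?thesis
    by (intro exI[of _ "(!) L"]) blast
qed

lemma exists_counts_near:
  fixes P :: "real^'d::finite"
  assumes "P \<in> psimplex"
  shows "\<exists>n::'d \<Rightarrow> nat. (\<Sum>i\<in>UNIV. n i) = T \<and> (\<forall>i. \<bar>real (n i) - real T * P $ i\<bar> \<le> real CARD('d))"
proof -
  obtain i\<^sub>0 :: 'd where True
    by simp
  define U where "U = UNIV - {i\<^sub>0}"
  \<comment> \<open>round every count down, except at \<open>i\<^sub>0\<close>, which absorbs the total rounding deficit\<close>
  define F where "F i = nat \<lfloor>real T * P $ i\<rfloor>" for i
  define deficit where "deficit = (\<Sum>i\<in>U. frac (real T * P $ i))"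
  have F_eq: "real (F i) = real T * P $ i - frac (real T * P $ i)" for i
    using assms by (simp add: F_def frac_def psimplex_def)
  have deficit_bounds: "0 \<le> deficit" "deficit \<le> real CARD('d)"
  proof -
    show "0 \<le> deficit"
      by (simp add: deficit_def sum_nonneg frac_ge_0)
    have "deficit \<le> (\<Sum>i\<in>U. 1)"
      unfolding deficit_def by (intro sum_mono less_imp_le frac_lt_1)
    also have "\<dots> \<le> real CARD('d)"
      by (simp add: U_def card_Diff_subset)
    finally show "deficit \<le> real CARD('d)" .
  qed
  have "P $ i\<^sub>0 + (\<Sum>i\<in>U. P $ i) = 1"
    using assms by (simp add: psimplex_def U_def sum.remove[of UNIV i\<^sub>0, symmetric])
  then have "real T * P $ i\<^sub>0 + real T * (\<Sum>i\<in>U. P $ i) = real T"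
    by (metis distrib_left mult_1_right)
  then have F_sum: "real (\<Sum>i\<in>U. F i) = real T - real T * P $ i\<^sub>0 - deficit"
    by (simp add: F_eq deficit_def sum_subtractf sum_distrib_left)
  moreover have "0 \<le> real T * P $ i\<^sub>0"
    using assms by (simp add: psimplex_def)
  ultimately have F_sum_le: "(\<Sum>i\<in>U. F i) \<le> T"
    using deficit_bounds(1) by linarith
  define n where "n i = (if i = i\<^sub>0 then T - (\<Sum>j\<in>U. F j) else F i)" for i
  have "(\<Sum>i\<in>UNIV. n i) = n i\<^sub>0 + (\<Sum>i\<in>U. n i)"
    by (simp add: U_def sum.remove[of UNIV i\<^sub>0])
  also have "(\<Sum>i\<in>U. n i) = (\<Sum>i\<in>U. F i)"
    by (intro sum.cong) (auto simp: n_def U_def)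
  finally have "(\<Sum>i\<in>UNIV. n i) = T"
    using F_sum_le by (simp add: n_def)
  moreover have "\<bar>real (n i) - real T * P $ i\<bar> \<le> real CARD('d)" for i
  proof (cases "i = i\<^sub>0")
    case True
    have "real (n i\<^sub>0) - real T * P $ i\<^sub>0 = deficit"
      using F_sum F_sum_le by (simp add: n_def of_nat_diff)
    then show ?thesis
      unfolding True using deficit_bounds by linarith
  next
    case False
    have "\<bar>real (n i) - real T * P $ i\<bar> = frac (real T * P $ i)"
      using False frac_ge_0[of "real T * P $ i"] by (simp add: n_def F_eq)
    moreover have "frac (real T * P $ i) < 1" "(1::real) \<le> real CARD('d)"
      by (simp_all add: frac_lt_1)
    ultimately show ?thesis
      by linarith
  qed
  ultimately show ?thesis
    by blast
qed

lemma exists_emp_near: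
  fixes P :: "real^'d::finite"
  assumes "P \<in> psimplex" and "T > 0"
  shows "\<exists>\<omega>. dist (emp T \<omega>) P \<le> real CARD('d) ^ 2 / real T"
proof -
  obtain n :: "'d \<Rightarrow> nat" where n: "(\<Sum>i\<in>UNIV. n i) = T"
    and near: "\<And>i. \<bar>real (n i) - real T * P $ i\<bar> \<le> real CARD('d)"
    using exists_counts_near[OF assms(1), of T] by blast
  obtain \<omega> :: "nat \<Rightarrow> 'd" where "\<forall>i. card {t\<in>{..<T}. \<omega> t = i} = n i"
    using exists_seq_with_counts[of n] unfolding n ..
  then have "(emp T \<omega> - P) $ i = (real (n i) - real T * P $ i) / real T" for i
    using assms(2) by (simp add: emp_def diff_divide_distrib)
  then have coordinate_bound: "\<bar>(emp T \<omega> - P) $ i\<bar> \<le> real CARD('d) / real T" for i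
    using near[of i] assms(2) by (simp add: abs_divide divide_right_mono)
  have "dist (emp T \<omega>) P \<le> (\<Sum>i\<in>UNIV. \<bar>(emp T \<omega> - P) $ i\<bar>)"
    unfolding dist_norm by (rule norm_le_l1_cart)
  also have "\<dots> \<le> (\<Sum>i\<in>(UNIV :: 'd set). real CARD('d) / real T)"
    by (intro sum_mono coordinate_bound)
  also have "\<dots> = real CARD('d) ^ 2 / real T"
    by (simp add: power2_eq_square)
  finally show ?thesis
    by blast
qed

lemma cost_le_Max:
  assumes "P \<in> psimplex"
  shows "cost l x P \<le> Max (range (l x))"
proof -
  have "cost l x P \<le> (\<Sum>i\<in>UNIV. Max (range (l x)) * P $ i)"
    using assms unfolding cost_def psimplex_def by (intro sum_mono mult_right_mono) auto
  also have "\<dots> = Max (range (l x))"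
    using assms by (simp add: psimplex_def flip: sum_distrib_left)
  finally show ?thesis .
qed

lemma cost_add: "cost l x (u + v) = cost l x u + cost l x v"
  by (simp add: cost_def distrib_left sum.distrib)

lemma cost_scaleR: "cost l x (c *\<^sub>R u) = c * cost l x u"
  by (simp add: cost_def sum_distrib_left algebra_simps)

lemma cost_axis: "cost l x (axis i 1) = l x i"
  by (simp add: cost_def axis_def if_distrib cong: if_cong)

lemma exists_psimplex_int_cost_gt:
  fixes l :: "'x \<Rightarrow> 'd::finite \<Rightarrow> real"
  assumes "\<epsilon> > 0"
  shows "\<exists>Q\<in>psimplex_int. Max (range (l x)) - \<epsilon> < cost l x Q"
proof -
  define M where "M = Max (range (l x))"
  obtain i\<^sub>0 where "l x i\<^sub>0 = M"
    unfolding M_def by (metis (mono_tags) Max_in UNIV_not_empty finite finite_imageI image_iff image_is_empty)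
  define R :: "real^'d" where "R = (\<chi> i. 1 / real CARD('d))"
  define \<eta> where "\<eta> = min 1 (\<epsilon> / (\<bar>M - cost l x R\<bar> + 1))"
  define Q where "Q = (1 - \<eta>) *\<^sub>R axis i\<^sub>0 1 + \<eta> *\<^sub>R R"
  have \<eta>: "0 < \<eta>" "\<eta> \<le> 1"
    using assms by (simp_all add: \<eta>_def)
  have "Q $ i > 0" for i
    using \<eta> by (simp add: Q_def R_def axis_def add_nonneg_pos)
  moreover have "(\<Sum>i\<in>UNIV. Q $ i) = 1"
    by (simp add: Q_def R_def axis_def sum.distrib flip: sum_distrib_left)
  ultimately have "Q \<in> psimplex_int"
    by (simp add: psimplex_int_def)
  have "\<eta> * (M - cost l x R) \<le> \<eta> * \<bar>M - cost l x R\<bar>"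
    using \<eta> by (intro mult_left_mono) auto
  moreover have "\<eta> * \<bar>M - cost l x R\<bar> < \<epsilon>"
  proof -
    have "\<eta> * \<bar>M - cost l x R\<bar> \<le> \<epsilon> / (\<bar>M - cost l x R\<bar> + 1) * \<bar>M - cost l x R\<bar>"
      by (intro mult_right_mono) (simp_all add: \<eta>_def)
    also have "\<dots> < \<epsilon>"
      using assms by (simp add: field_simps)
    finally show ?thesis .
  qed
  moreover have "cost l x Q = M - \<eta> * (M - cost l x R)"
    unfolding Q_def cost_add cost_scaleR cost_axis \<open>l x i\<^sub>0 = M\<close> by (simp add: algebra_simps)
  ultimately have "M - \<epsilon> < cost l x Q"
    by linarith
  then show ?thesis
    using \<open>Q \<in> psimplex_int\<close> unfolding M_def by blast
qed

lemma continuous_on_Max_finite: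
  assumes "finite A" "A \<noteq> {}" "\<And>i. i \<in> A \<Longrightarrow> continuous_on X (\<lambda>x. f x i)"
  shows "continuous_on X (\<lambda>x. Max ((\<lambda>i. f x i) ` A) :: real)"
  using assms
proof (induction A rule: finite_ne_induct)
  case (insert i A)
  then show ?case
    by (simp add: continuous_on_max)
qed simp

lemma regular_const_pred:
  fixes f :: "real^'n \<Rightarrow> real"
  assumes X: "compact X" and f: "continuous_on X f"
  shows "regular X (\<lambda>x (P :: real^'d::finite) T. f x)"
proof -
  obtain B where "\<And>x. x \<in> X \<Longrightarrow> \<bar>f x\<bar> \<le> B"
    using compact_imp_bounded[OF compact_continuous_image[OF f X]] by (auto simp: bounded_real)
  then have bounded: "\<exists>B. \<forall>T. \<forall>x\<in>X. \<forall>P\<in>psimplex. \<bar>f x\<bar> \<le> B"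
    by blast
  have "continuous_on (X \<times> (psimplex :: (real^'d) set)) (\<lambda>z. f (fst z))"
    by (intro continuous_on_compose2[OF f] continuous_intros) auto
  then have equicont: "equicontinuous_on (X \<times> (psimplex :: (real^'d) set)) (\<lambda>T (x, P). f x)"
    unfolding equicontinuous_on_def continuous_on_iff
    by (simp add: case_prod_beta dist_commute)
  have "((\<lambda>Q. f x) has_derivative (\<lambda>h. 0 \<bullet> h)) (at P within psimplex)" for x and P :: "real^'d"
    by (simp add: has_derivative_const)
  then have "\<exists>D :: nat \<Rightarrow> real^'n \<Rightarrow> real^'d \<Rightarrow> real^'d.
      (\<forall>T. \<forall>x\<in>X. \<forall>P\<in>psimplex. ((\<lambda>Q. f x) has_derivative (\<lambda>h. D T x P \<bullet> h)) (at P within psimplex)) \<and>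
      (\<exists>B. \<forall>T. \<forall>x\<in>X. \<forall>P\<in>psimplex. norm (D T x P) \<le> B) \<and>
      equicontinuous_on (X \<times> psimplex) (\<lambda>T (x, P). D T x P)"
    by (intro exI[of _ "\<lambda>_ _ _. 0"]) (auto simp: equicontinuous_on_def)
  then show ?thesis
    unfolding regular_def using bounded equicont by blast
qed

lemma limsup_eratio_le_one:
  fixes f :: "nat \<Rightarrow> real"
  assumes "c \<le> M" and lower: "\<And>\<epsilon>. \<epsilon> > 0 \<Longrightarrow> eventually (\<lambda>T. M - \<epsilon> < f T) sequentially"
  shows "limsup (\<lambda>T. eratio \<bar>M - c\<bar> \<bar>f T - c\<bar>) \<le> 1"
proof (cases "c = M")
  case True
  then show ?thesis
    by (intro Limsup_bounded) (simp add: eratio_def)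
next
  case False
  with \<open>c \<le> M\<close> have "c < M"
    by simp
  show ?thesis
  proof (rule ereal_le_epsilon2)
    fix e :: real assume "e > 0"
    have "eventually (\<lambda>T. M - e * (M - c) / (1 + e) < f T) sequentially"
      using \<open>c < M\<close> \<open>e > 0\<close> by (intro lower) simp
    then have "eventually (\<lambda>T. eratio \<bar>M - c\<bar> \<bar>f T - c\<bar> \<le> 1 + ereal e) sequentially"
    proof eventually_elim
      case (elim T)
      have "M + c * e < f T + e * f T"
        using elim \<open>e > 0\<close> by (simp add: field_simps)
      then have "M - c < (1 + e) * (f T - c)"
        by (simp add: algebra_simps)
      moreover have "f T - c > 0"
        using \<open>M - c < (1 + e) * (f T - c)\<close> \<open>c < M\<close> \<open>e > 0\<close>
        by (smt (verit) zero_less_mult_iff)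
      ultimately have "(M - c) / (f T - c) \<le> 1 + e"
        by (simp add: pos_divide_le_eq)
      then show ?case
        using \<open>c < M\<close> \<open>f T - c > 0\<close> by (simp add: eratio_def)
    qed
    then show "limsup (\<lambda>T. eratio \<bar>M - c\<bar> \<bar>f T - c\<bar>) \<le> 1 + ereal e"
      by (rule Limsup_bounded)
  qed
qed

lemma eventually_cost_lt_pred:
  fixes l :: "real^'n \<Rightarrow> 'd::finite \<Rightarrow> real" and a :: "nat \<Rightarrow> real"
  assumes a_pos: "\<And>T. a T > 0"
    and superexp: "filterlim (\<lambda>T. a T / real T) at_top sequentially"
    and reg: "regular X ch" and oos: "oos_guarantee X l a ch"
    and x: "x \<in> X" and P: "P \<in> psimplex" and Q: "Q \<in> psimplex_int" and \<epsilon>: "\<epsilon> > 0"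
  shows "eventually (\<lambda>T. cost l x Q - \<epsilon> < ch x P T) sequentially"
proof -
  have "limsup (\<lambda>T. eln (measure (iid Q) {\<omega>\<in>space (iid Q). cost l x Q > ch x (emp T \<omega>) T}) / ereal (a T)) \<le> -1"
    using oos x Q unfolding oos_guarantee_def by blast
  then have never_below: "eventually (\<lambda>T. \<forall>\<omega>. \<not> cost l x Q > ch x (emp T \<omega>) T) sequentially"
    by (rule eventually_emp_event_empty[where B = "\<lambda>T R. cost l x Q > ch x R T", OF Q _ a_pos superexp])
  have "equicontinuous_on (X \<times> psimplex) (\<lambda>T (x, R). ch x R T)"
    using reg by (simp add: regular_def)
  then obtain \<delta> where "\<delta> > 0" and \<delta>:
    "\<forall>z\<in>X \<times> psimplex. dist z (x, P) < \<delta> \<longrightarrow> (\<forall>T. dist (ch x P T) (case z of (x, R) \<Rightarrow> ch x R T) < \<epsilon>)"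
    using x P \<epsilon> unfolding equicontinuous_on_def by fastforce
  have "eventually (\<lambda>T. real CARD('d) ^ 2 / real T < \<delta>) sequentially"
    using \<open>\<delta> > 0\<close> by (intro order_tendstoD(2)[OF lim_const_over_n])
  with never_below eventually_gt_at_top[of "0::nat"] show ?thesis
  proof eventually_elim
    case (elim T)
    obtain \<omega> where "dist (emp T \<omega>) P \<le> real CARD('d) ^ 2 / real T"
      using exists_emp_near[OF P \<open>T > 0\<close>] by blast
    moreover have "dist (x, emp T \<omega>) (x, P) = dist (emp T \<omega>) P"
      by (simp add: dist_Pair_Pair)
    moreover have "(x, emp T \<omega>) \<in> X \<times> psimplex"
      using x emp_in_psimplex[OF \<open>T > 0\<close>] by simp
    ultimately have "dist (ch x P T) (ch x (emp T \<omega>) T) < \<epsilon>"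
      using \<delta> elim(3) by fastforce
    moreover have "cost l x Q \<le> ch x (emp T \<omega>) T"
      using elim(1) by (simp add: not_less)
    ultimately show ?case
      by (simp add: dist_real_def abs_less_iff)
  qed
qed

lemma eventually_Max_lt_pred:
  fixes l :: "real^'n \<Rightarrow> 'd::finite \<Rightarrow> real" and a :: "nat \<Rightarrow> real"
  assumes a_pos: "\<And>T. a T > 0"
    and superexp: "filterlim (\<lambda>T. a T / real T) at_top sequentially"
    and reg: "regular X ch" and oos: "oos_guarantee X l a ch"
    and x: "x \<in> X" and P: "P \<in> psimplex" and \<epsilon>: "\<epsilon> > 0"
  shows "eventually (\<lambda>T. Max (range (l x)) - \<epsilon> < ch x P T) sequentially"
proof -
  obtain Q where Q: "Q \<in> psimplex_int" and "Max (range (l x)) - \<epsilon> / 2 < cost l x Q"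
    using exists_psimplex_int_cost_gt[of "\<epsilon> / 2" l x] \<epsilon> by auto
  moreover have "eventually (\<lambda>T. cost l x Q - \<epsilon> / 2 < ch x P T) sequentially"
    using \<epsilon> by (intro eventually_cost_lt_pred[OF a_pos superexp reg oos x P Q]) simp
  ultimately show ?thesis
    by (simp add: eventually_mono)
qed

theorem mainTheorem2:
  fixes X :: "(real^'n) set"
    and l :: "real^'n \<Rightarrow> 'd::finite \<Rightarrow> real"
    and a :: "nat \<Rightarrow> real"
  assumes d2: "CARD('d) \<ge> 2"
    and X: "compact X"
    and l_cont: "\<And>i. continuous_on X (\<lambda>x. l x i)"
    and a_pos: "\<And>T. a T > 0"
    and a_inf: "filterlim a at_top sequentially"
    and superexp: "filterlim (\<lambda>T. a T / real T) at_top sequentially"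
  shows "regular X (robust_pred l)
    \<and> oos_guarantee X l a (robust_pred l)
    \<and> (\<forall>x\<in>X. \<forall>P\<in>psimplex. \<forall>T.
          measure (iid P) {\<omega>\<in>space (iid P). cost l x P > robust_pred l x (emp T \<omega>) T} = 0)
    \<and> (\<forall>ch. regular X ch \<and> oos_guarantee X l a ch \<longrightarrow> pred_le X l (robust_pred l) ch)"
proof (intro conjI allI impI)
  have robust_eq: "robust_pred l = (\<lambda>x P T. Max (range (l x)))"
    by (intro ext) (simp add: robust_pred_def)
  show "regular X (robust_pred l)"
    unfolding robust_eq by (intro regular_const_pred X continuous_on_Max_finite l_cont) auto
  have never_below: "{\<omega>\<in>space (iid P). cost l x P > robust_pred l x (emp T \<omega>) T} = {}"
    if "P \<in> psimplex" for x P T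
  proof -
    have "\<not> Max (range (l x)) < cost l x P"
      using cost_le_Max[OF that] by (simp only: not_less)
    then show ?thesis
      unfolding robust_eq by blast
  qed
  then show "\<forall>x\<in>X. \<forall>P\<in>psimplex. \<forall>T.
      measure (iid P) {\<omega>\<in>space (iid P). cost l x P > robust_pred l x (emp T \<omega>) T} = 0"
    by simp
  show "oos_guarantee X l a (robust_pred l)"
    unfolding oos_guarantee_def
  proof (intro ballI Limsup_bounded always_eventually allI)
    fix x and P :: "real^'d" and T assume "P \<in> psimplex_int"
    with psimplex_int_subset have "P \<in> psimplex"
      by blast
    show "eln (measure (iid P) {\<omega>\<in>space (iid P). cost l x P > robust_pred l x (emp T \<omega>) T}) / ereal (a T) \<le> -1"
      using a_pos[of T] by (simp only: never_below[OF \<open>P \<in> psimplex\<close>]) (simp add: eln_def)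
  qed
  fix ch assume "regular X ch \<and> oos_guarantee X l a ch"
  with psimplex_int_subset show "pred_le X l (robust_pred l) ch"
    unfolding pred_le_def robust_eq
    by (auto intro!: limsup_eratio_le_one cost_le_Max eventually_Max_lt_pred[OF a_pos superexp])
qed

end
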